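(* Let $S$ be an additively cancellative centrally essential semiring. Then every complemented idempotent of $S$ is central, i.e. if $e,f\in S$ satisfy $e^2=e$, $f^2=f$ and $e+f=1$, then $e\in C(S)$.
   Context: A semiring is a set $S$ with two binary operations $+$ and $\cdot$ such that $(S,+)$ is a commutative monoid with neutral element $0$, $(S,\cdot)$ is a monoid with identity $1$, multiplication distributes over addition on both sides, and $0s=s0=0$ for all $s\in S$. The center is $C(S)=\{s\in S: ss'=s's \text{ for all } s'\in S\}$. $S$ is centrally essential if for every non-zero $x\in S$ there exist non-zero $y,z\in C(S)$ with $xy=z$. $S$ is additively cancellative if $x+z=y+z$ implies $x=y$. An idempotent $e$ is complemented if there is an idempotent $f\in S$ with $e+f=1$. *)

theory Defs
  imports Main
begin

text \<open>Semirings are modelled by the type class combination {semiring_0, monoid_mult}: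
  commutative additive monoid, multiplicative monoid with 1, two-sided distributivity,
  and 0 absorbing. (No requirement 0 ~= 1.)\<close>

definition center :: "'a::{semiring_0,monoid_mult} set" where
  "center = {s. \<forall>s'. s * s' = s' * s}"

definition centrally_essential :: "'a::{semiring_0,monoid_mult} itself \<Rightarrow> bool" where
  "centrally_essential _ \<longleftrightarrow>
     (\<forall>x::'a. x \<noteq> 0 \<longrightarrow> (\<exists>y z. y \<in> center \<and> z \<in> center \<and> y \<noteq> 0 \<and> z \<noteq> 0 \<and> x * y = z))"

definition add_cancellative :: "'a::{semiring_0,monoid_mult} itself \<Rightarrow> bool" where
  "add_cancellative _ \<longleftrightarrow> (\<forall>x y z::'a. x + z = y + z \<longrightarrow> x = y)"

end

theory Submission
  imports Defs
begin

text \<open>Cancellation makes the complementary idempotents \<open>e\<close> and \<open>f\<close> orthogonal, so every \<open>s\<close>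
  splits into Peirce corners \<open>ese + esf + fse + fsf\<close>. An off-diagonal corner \<open>x = esf\<close> satisfies
  \<open>ex = x\<close> and \<open>xe = 0\<close>; for central \<open>y\<close> the central element \<open>z = xy\<close> inherits both equations,
  and \<open>ez = ze\<close> then forces \<open>z = 0\<close>. Central essentiality therefore kills both off-diagonal
  corners, and \<open>es = ese = se\<close>.\<close>

lemma add_cancellative_right_cancel:
  fixes x y z :: "'a::{semiring_0,monoid_mult}"
  assumes "add_cancellative TYPE('a)" and "x + z = y + z"
  shows "x = y"
  using assms unfolding add_cancellative_def by blast

lemma add_cancellative_complement_orthogonal:
  fixes e f :: "'a::{semiring_0,monoid_mult}"
  assumes canc: "add_cancellative TYPE('a)" and idem: "e * e = e" and compl: "e + f = 1"
  shows "e * f = 0" and "f * e = 0"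
proof -
  have "e * f + e = 0 + e"
    using arg_cong[where f = "(*) e", OF compl] idem by (simp add: distrib_left add.commute)
  then show "e * f = 0" by (rule add_cancellative_right_cancel[OF canc])
  have "f * e + e = 0 + e"
    using arg_cong[where f = "\<lambda>t. t * e", OF compl] idem by (simp add: distrib_right add.commute)
  then show "f * e = 0" by (rule add_cancellative_right_cancel[OF canc])
qed

lemma centrally_essential_fixed_annihilated_eq_0:
  fixes a x :: "'a::{semiring_0,monoid_mult}"
  assumes ce: "centrally_essential TYPE('a)" and fixed: "a * x = x" and annihilated: "x * a = 0"
  shows "x = 0"
proof (rule ccontr)
  assume "x \<noteq> 0"
  then obtain y z where y: "y \<in> center" and z: "z \<in> center" and "z \<noteq> 0" and xy: "x * y = z"
    using ce unfolding centrally_essential_def by blast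
  have "a * z = z"
    using fixed xy by (metis mult.assoc)
  moreover have "z * a = 0"
  proof -
    have "y * a = a * y"
      using y by (simp add: center_def)
    then have "z * a = x * (a * y)"
      using xy by (metis mult.assoc)
    also have "\<dots> = 0"
      using annihilated by (metis mult.assoc mult_zero_left)
    finally show ?thesis .
  qed
  moreover have "a * z = z * a"
    using z by (simp add: center_def)
  ultimately show False
    using \<open>z \<noteq> 0\<close> by simp
qed

lemma centrally_essential_off_diagonal_corner_eq_0:
  fixes e f s :: "'a::{semiring_0,monoid_mult}"
  assumes "centrally_essential TYPE('a)" and "e * e = e" and "f * e = 0"
  shows "e * s * f = 0"
proof -
  have "e * (e * s * f) = e * s * f"
    using assms(2) by (simp add: mult.assoc[symmetric])
  moreover have "e * s * f * e = 0"
    using assms(3) by (simp add: mult.assoc)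
  ultimately show ?thesis
    by (rule centrally_essential_fixed_annihilated_eq_0[OF assms(1)])
qed

lemma commute_if_off_diagonal_corners_eq_0:
  fixes e f s :: "'a::{semiring_0,monoid_mult}"
  assumes compl: "e + f = 1" and "e * s * f = 0" and "f * s * e = 0"
  shows "e * s = s * e"
proof -
  have "e * s = e * s * (e + f)"
    using compl by simp
  also have "\<dots> = e * s * e"
    using assms(2) by (simp add: distrib_left)
  also have "\<dots> = (e + f) * s * e"
    using assms(3) by (simp add: distrib_right)
  also have "\<dots> = s * e"
    using compl by simp
  finally show ?thesis .
qed

theorem proposition2p3:
  fixes e f :: "'a::{semiring_0,monoid_mult}"
  assumes "add_cancellative TYPE('a)"
    and "centrally_essential TYPE('a)"
    and "e * e = e" and "f * f = f" and "e + f = 1"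
  shows "e \<in> center"
proof -
  have "f * e = 0" and "e * f = 0"
    using add_cancellative_complement_orthogonal[OF assms(1,3,5)] by simp_all
  have "e * s * f = 0" and "f * s * e = 0" for s
    using centrally_essential_off_diagonal_corner_eq_0[OF assms(2,3) \<open>f * e = 0\<close>]
      centrally_essential_off_diagonal_corner_eq_0[OF assms(2,4) \<open>e * f = 0\<close>] by blast+
  then show ?thesis
    unfolding center_def using commute_if_off_diagonal_corners_eq_0[OF assms(5)] by blast
qed

end
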